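(* Let $(V_0,V_1,V_2,V_3,w)$ be a geometric quintuple. Then for $w$ in a nonempty Zariski open subset $\mathcal{U}'$ (of the space of such tensors, up to the scaling action of $\mathbb{G}_m^4$), the linear map $\langle-,w\rangle\colon V_2^\vee\otimes V_3^\vee\to V_0\otimes V_1$ (contraction with $w$ in the last two factors) is an isomorphism, and hence $$\square_w=(V_0\otimes V_1,\,V_0,\,V_1,\,V_2^\vee,\,V_3^\vee,\,\mathrm{id},\,\phi_w),\qquad \phi_w=\langle-,w\rangle^{-1},$$ is a geometric square.
   Context: $k$ is algebraically closed of characteristic $0$. A quintuple $(V_0,V_1,V_2,V_3,W)$, with $V_i$ $2$-dimensional vector spaces and $0\neq W=kw\subset V_0\otimes V_1\otimes V_2\otimes V_3$, is geometric if for all $j\in\{0,1,2,3\}$ and all nonzero $\phi_j\in V_j^\vee$, $\phi_{j+1}\in V_{j+1}^\vee$ (indices mod 4), the contraction $\langle\phi_j\otimes\phi_{j+1},w\rangle$ is nonzero; the quintuple is identified with $w$. A geometric square is a septuple $(V,U_0^0,U_1^0,U_0^1,U_1^1,\phi_0,\phi_1)$ with $V$ a $4$-dimensional vector space, $U_i^j$ $2$-dimensional vector spaces and $\phi_i\colon V\to U_0^i\otimes U_1^i$ isomorphisms. *)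

theory Defs
  imports "HOL-Computational_Algebra.Polynomial"
begin

text \<open>Coordinates: each V_i is identified with k^2 (basis indexed by bool), so a tensor
 w in V_0 (x) V_1 (x) V_2 (x) V_3 is a function w a b c d, and a dual vector phi in V_i^dual
 is a function bool => k (pairing sum_a phi a * v a).\<close>

type_synonym 'k tensor4 = "bool \<Rightarrow> bool \<Rightarrow> bool \<Rightarrow> bool \<Rightarrow> 'k"

definition alg_closed :: "'k::field itself \<Rightarrow> bool" where
  "alg_closed _ \<longleftrightarrow> (\<forall>p :: 'k poly. degree p \<ge> 1 \<longrightarrow> (\<exists>x. poly p x = 0))"

definition nonzero_fun :: "(bool \<Rightarrow> 'k::zero) \<Rightarrow> bool" where
  "nonzero_fun f \<longleftrightarrow> (\<exists>a. f a \<noteq> 0)"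

definition contr01 :: "(bool \<Rightarrow> 'k::comm_ring) \<Rightarrow> (bool \<Rightarrow> 'k) \<Rightarrow> 'k tensor4 \<Rightarrow> bool \<Rightarrow> bool \<Rightarrow> 'k" where
  "contr01 f g w c d = (\<Sum>a\<in>UNIV. \<Sum>b\<in>UNIV. f a * g b * w a b c d)"
definition contr12 :: "(bool \<Rightarrow> 'k::comm_ring) \<Rightarrow> (bool \<Rightarrow> 'k) \<Rightarrow> 'k tensor4 \<Rightarrow> bool \<Rightarrow> bool \<Rightarrow> 'k" where
  "contr12 f g w a d = (\<Sum>b\<in>UNIV. \<Sum>c\<in>UNIV. f b * g c * w a b c d)"
definition contr23 :: "(bool \<Rightarrow> 'k::comm_ring) \<Rightarrow> (bool \<Rightarrow> 'k) \<Rightarrow> 'k tensor4 \<Rightarrow> bool \<Rightarrow> bool \<Rightarrow> 'k" where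
  "contr23 f g w a b = (\<Sum>c\<in>UNIV. \<Sum>d\<in>UNIV. f c * g d * w a b c d)"
definition contr30 :: "(bool \<Rightarrow> 'k::comm_ring) \<Rightarrow> (bool \<Rightarrow> 'k) \<Rightarrow> 'k tensor4 \<Rightarrow> bool \<Rightarrow> bool \<Rightarrow> 'k" where
  "contr30 f g w b c = (\<Sum>d\<in>UNIV. \<Sum>a\<in>UNIV. f d * g a * w a b c d)"

definition nonzero2 :: "(bool \<Rightarrow> bool \<Rightarrow> 'k::zero) \<Rightarrow> bool" where
  "nonzero2 t \<longleftrightarrow> (\<exists>a b. t a b \<noteq> 0)"

definition geometric :: "'k::comm_ring tensor4 \<Rightarrow> bool" where
  "geometric w \<longleftrightarrow>
     (\<forall>f g. nonzero_fun f \<longrightarrow> nonzero_fun g \<longrightarrow>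
        nonzero2 (contr01 f g w) \<and> nonzero2 (contr12 f g w) \<and>
        nonzero2 (contr23 f g w) \<and> nonzero2 (contr30 f g w))"

definition contr_map :: "'k::comm_ring tensor4 \<Rightarrow> (bool \<Rightarrow> bool \<Rightarrow> 'k) \<Rightarrow> bool \<Rightarrow> bool \<Rightarrow> 'k" where
  "contr_map w psi a b = (\<Sum>c\<in>UNIV. \<Sum>d\<in>UNIV. psi c d * w a b c d)"

inductive tensor_poly :: "('k::comm_ring_1 tensor4 \<Rightarrow> 'k) \<Rightarrow> bool" where
  const: "tensor_poly (\<lambda>w. c)"
| coord: "tensor_poly (\<lambda>w. w a b c d)"
| add: "tensor_poly P \<Longrightarrow> tensor_poly Q \<Longrightarrow> tensor_poly (\<lambda>w. P w + Q w)"
| mult: "tensor_poly P \<Longrightarrow> tensor_poly Q \<Longrightarrow> tensor_poly (\<lambda>w. P w * Q w)"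

definition zariski_open :: "'k::comm_ring_1 tensor4 set \<Rightarrow> bool" where
  "zariski_open U \<longleftrightarrow> (\<exists>F. (\<forall>P\<in>F. tensor_poly P) \<and> U = {w. \<exists>P\<in>F. P w \<noteq> 0})"

end

theory Submission
  imports Defs "HOL-Analysis.Analysis"
begin

text \<open>A tensor w in V_0 \<otimes> V_1 \<otimes> V_2 \<otimes> V_3 has four cyclic flattenings
  V_j^dual \<otimes> V_{j+1}^dual \<rightarrow> V_{j+2} \<otimes> V_{j+3}, all 4 \<times> 4 matrices whose entries are
  coordinates of w. Take U' to be the locus where all four are invertible, i.e. where the
  product of their determinants does not vanish. This is Zariski open, it is stable under
  scaling because each determinant is homogeneous, and it contains the identity tensor
  \<delta>_{ac} \<delta>_{bd}, whose flattenings are the identity or the swap of V_0 \<otimes> V_1.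
  An invertible flattening maps the nonzero pure tensor \<phi>_j \<otimes> \<phi>_{j+1} to a nonzero
  vector, which is the geometricity condition, and the flattening along V_2 \<otimes> V_3 is the
  matrix of the contraction map itself.\<close>

lemma sum_UNIV_prod:
  "(\<Sum>j\<in>(UNIV :: ('a::finite \<times> 'b::finite) set). h j) = (\<Sum>a\<in>UNIV. \<Sum>b\<in>UNIV. h (a, b))"
  by (simp add: UNIV_Times_UNIV[symmetric] sum.cartesian_product del: UNIV_Times_UNIV)

lemma det_scale_rows:
  "det (\<chi> i. s *s A$i) = s ^ CARD('n) * det (A :: 'a::comm_ring_1^'n::finite^'n)"
  using det_rows_mul[of "\<lambda>_. s" "\<lambda>i. A$i"] by simp

lemma matrix_vector_mult_nonzero:
  fixes A :: "'a::field^'n::finite^'m::finite"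
  assumes "invertible A" "x \<noteq> 0"
  shows "A *v x \<noteq> 0"
  using inj_matrix_vector_mult[OF assms(1)] assms(2)
  by (metis matrix_vector_mult_0_right injD)

lemma tensor_poly_sum:
  "finite S \<Longrightarrow> (\<And>x. x \<in> S \<Longrightarrow> tensor_poly (P x)) \<Longrightarrow> tensor_poly (\<lambda>w. \<Sum>x\<in>S. P x w)"
  by (induction S rule: finite_induct) (auto intro: tensor_poly.intros)

lemma tensor_poly_prod:
  "finite S \<Longrightarrow> (\<And>x. x \<in> S \<Longrightarrow> tensor_poly (P x)) \<Longrightarrow> tensor_poly (\<lambda>w. \<Prod>x\<in>S. P x w)"
  by (induction S rule: finite_induct) (auto intro: tensor_poly.intros)

lemma tensor_poly_det:
  assumes "\<And>i j. tensor_poly (\<lambda>w. (M w :: 'k::comm_ring_1^'n::finite^'n)$i$j)"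
  shows "tensor_poly (\<lambda>w. det (M w))"
  unfolding det_def
  by (intro tensor_poly_sum tensor_poly_prod tensor_poly.mult tensor_poly.const assms
      finite_permutations finite)

text \<open>flat_jk w is the matrix of the contraction V_j^dual \<otimes> V_k^dual \<rightarrow> V_{k+1} \<otimes> V_{k+2}.\<close>

definition flat01 :: "'k tensor4 \<Rightarrow> 'k^(bool \<times> bool)^(bool \<times> bool)" where
  "flat01 w = (\<chi> i j. w (fst j) (snd j) (fst i) (snd i))"

definition flat12 :: "'k tensor4 \<Rightarrow> 'k^(bool \<times> bool)^(bool \<times> bool)" where
  "flat12 w = (\<chi> i j. w (fst i) (fst j) (snd j) (snd i))"

definition flat23 :: "'k tensor4 \<Rightarrow> 'k^(bool \<times> bool)^(bool \<times> bool)" where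
  "flat23 w = (\<chi> i j. w (fst i) (snd i) (fst j) (snd j))"

definition flat30 :: "'k tensor4 \<Rightarrow> 'k^(bool \<times> bool)^(bool \<times> bool)" where
  "flat30 w = (\<chi> i j. w (snd j) (fst i) (snd i) (fst j))"

definition pure_tensor :: "(bool \<Rightarrow> 'k) \<Rightarrow> (bool \<Rightarrow> 'k) \<Rightarrow> 'k::times^(bool \<times> bool)" where
  "pure_tensor f g = (\<chi> j. f (fst j) * g (snd j))"

lemma pure_tensor_nonzero:
  assumes "nonzero_fun f" "nonzero_fun (g :: bool \<Rightarrow> 'k::field)"
  shows "pure_tensor f g \<noteq> 0"
proof
  obtain a b where "f a \<noteq> 0" "g b \<noteq> 0"
    using assms by (auto simp: nonzero_fun_def)
  moreover assume "pure_tensor f g = 0"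
  then have "(pure_tensor f g)$(a, b) = 0" by simp
  ultimately show False by (simp add: pure_tensor_def)
qed

lemma
  fixes w :: "'k::comm_ring_1 tensor4"
  shows flat01_pure_tensor: "(flat01 w *v pure_tensor f g)$(c, d) = contr01 f g w c d"
    and flat12_pure_tensor: "(flat12 w *v pure_tensor f g)$(a, d) = contr12 f g w a d"
    and flat23_pure_tensor: "(flat23 w *v pure_tensor f g)$(a, b) = contr23 f g w a b"
    and flat30_pure_tensor: "(flat30 w *v pure_tensor f g)$(b, c) = contr30 f g w b c"
  by (simp_all add: flat01_def flat12_def flat23_def flat30_def pure_tensor_def
      matrix_vector_mult_def contr01_def contr12_def contr23_def contr30_def sum_UNIV_prod mult_ac)

lemma nonzero2_contraction_if_invertible:
  fixes A :: "'k::field^(bool \<times> bool)^(bool \<times> bool)"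
  assumes "invertible A" "nonzero_fun f" "nonzero_fun g"
    and "\<And>x y. (A *v pure_tensor f g)$(x, y) = t x y"
  shows "nonzero2 t"
proof -
  have "A *v pure_tensor f g \<noteq> 0"
    using assms(1-3) by (intro matrix_vector_mult_nonzero pure_tensor_nonzero)
  then show ?thesis
    using assms(4) by (auto simp: nonzero2_def vec_eq_iff)
qed

lemma contr_map_eq_flat23:
  "contr_map w = (\<lambda>v a b. v$(a, b)) \<circ> ((*v) (flat23 w)) \<circ> (\<lambda>psi. \<chi> j. psi (fst j) (snd j))"
  by (simp add: fun_eq_iff flat23_def matrix_vector_mult_def contr_map_def sum_UNIV_prod mult_ac)

lemma bij_contr_map_if_invertible:
  fixes w :: "'k::field tensor4"
  assumes "invertible (flat23 w)"
  shows "bij (contr_map w)"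
proof -
  have "bij (\<lambda>psi :: bool \<Rightarrow> bool \<Rightarrow> 'k. \<chi> j. psi (fst j) (snd j))"
    and "bij (\<lambda>(v :: 'k^(bool \<times> bool)) a b. v$(a, b))"
    by (rule o_bij[where g = "\<lambda>v a b. v$(a, b)"] o_bij[where g = "\<lambda>psi. \<chi> j. psi (fst j) (snd j)"];
        simp add: fun_eq_iff vec_eq_iff)+
  moreover have "bij ((*v) (flat23 w))"
    using assms by (simp add: invertible_eq_bij)
  ultimately show ?thesis
    unfolding contr_map_eq_flat23 by (intro bij_comp)
qed

definition flat_det :: "'k::comm_ring_1 tensor4 \<Rightarrow> 'k" where
  "flat_det w = det (flat01 w) * det (flat12 w) * det (flat23 w) * det (flat30 w)"

lemma tensor_poly_flat_det: "tensor_poly flat_det"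
  unfolding flat_det_def[abs_def]
  by (intro tensor_poly.mult tensor_poly_det)
     (simp_all add: flat01_def flat12_def flat23_def flat30_def tensor_poly.coord)

lemma flat_det_scale:
  "flat_det (\<lambda>a b c d. s * w a b c d) = s ^ 16 * flat_det (w :: 'k::comm_ring_1 tensor4)"
proof -
  have "flat01 (\<lambda>a b c d. s * w a b c d) = (\<chi> i. s *s flat01 w $ i)"
    and "flat12 (\<lambda>a b c d. s * w a b c d) = (\<chi> i. s *s flat12 w $ i)"
    and "flat23 (\<lambda>a b c d. s * w a b c d) = (\<chi> i. s *s flat23 w $ i)"
    and "flat30 (\<lambda>a b c d. s * w a b c d) = (\<chi> i. s *s flat30 w $ i)"
    by (simp_all add: flat01_def flat12_def flat23_def flat30_def vec_eq_iff)
  moreover have "s ^ 16 = s ^ 4 * s ^ 4 * s ^ 4 * s ^ 4"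
    by (simp flip: power_add)
  ultimately show ?thesis
    by (simp add: flat_det_def det_scale_rows mult_ac)
qed

lemma flat_det_nonzero_imp:
  fixes w :: "'k::field tensor4"
  assumes "flat_det w \<noteq> 0"
  shows "geometric w" and "bij (contr_map w)"
proof -
  have "invertible (flat01 w)" "invertible (flat12 w)" "invertible (flat23 w)" "invertible (flat30 w)"
    using assms by (auto simp: flat_det_def invertible_det_nz)
  then show "geometric w" and "bij (contr_map w)"
    by (auto simp: geometric_def intro: nonzero2_contraction_if_invertible bij_contr_map_if_invertible
        flat01_pure_tensor flat12_pure_tensor flat23_pure_tensor flat30_pure_tensor)
qed

definition identity_tensor :: "'k::zero_neq_one tensor4" where
  "identity_tensor a b c d = (if c = a \<and> d = b then 1 else 0)"

lemma flat_det_identity_tensor: "flat_det (identity_tensor :: 'k::comm_ring_1 tensor4) \<noteq> 0"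
proof -
  have identities: "flat01 identity_tensor = mat 1" "flat23 identity_tensor = mat 1"
    "flat30 identity_tensor = mat 1"
    by (auto simp: flat01_def flat23_def flat30_def identity_tensor_def mat_def vec_eq_iff prod_eq_iff)
  have "flat12 identity_tensor ** flat12 identity_tensor = (mat 1 :: 'k^(bool \<times> bool)^(bool \<times> bool))"
    by (auto simp: flat12_def identity_tensor_def mat_def vec_eq_iff matrix_matrix_mult_def
        sum_UNIV_prod prod_eq_iff UNIV_bool)
  then have "det (flat12 identity_tensor) * det (flat12 identity_tensor) = (1 :: 'k)"
    by (metis det_I det_mul)
  then show ?thesis
    by (auto simp: flat_det_def identities)
qed

theorem proposition3p13:
  assumes "alg_closed TYPE('k::field_char_0)"
  shows "\<exists>U :: 'k tensor4 set.
           zariski_open U \<and> U \<noteq> {} \<and>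
           (\<forall>w\<in>U. \<forall>t0 t1 t2 t3. t0 \<noteq> 0 \<longrightarrow> t1 \<noteq> 0 \<longrightarrow> t2 \<noteq> 0 \<longrightarrow> t3 \<noteq> 0 \<longrightarrow>
               (\<lambda>a b c d. (t0 * t1 * t2 * t3) * w a b c d) \<in> U) \<and>
           (\<forall>w\<in>U. geometric w \<and> bij (contr_map w))"
proof -
  let ?U = "{w :: 'k tensor4. flat_det w \<noteq> 0}"
  have "zariski_open ?U"
    unfolding zariski_open_def using tensor_poly_flat_det by (intro exI[of _ "{flat_det}"]) auto
  moreover have "?U \<noteq> {}"
    using flat_det_identity_tensor by blast
  moreover have "(\<lambda>a b c d. (t0 * t1 * t2 * t3) * w a b c d) \<in> ?U"
    if "w \<in> ?U" "t0 \<noteq> 0" "t1 \<noteq> 0" "t2 \<noteq> 0" "t3 \<noteq> 0" for w t0 t1 t2 t3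
    using that by (simp add: flat_det_scale)
  moreover have "geometric w \<and> bij (contr_map w)" if "w \<in> ?U" for w
    using that by (simp add: flat_det_nonzero_imp)
  ultimately show ?thesis
    by (intro exI[of _ ?U]) blast
qed

end
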